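(* Let $\mathfrak{R}$ be a complete rewriting system on $\Sigma$ and let $w\in\Sigma^*$. Assume that $\mathrm{Allseq}(w)$ terminates. If there are no cyclical overlaps and no cyclical inclusions in $\mathrm{Allseq}(w)$, then $\mathrm{Allseq}(w)$ converges.
   Context: $\Sigma^*$ is the free monoid on $\Sigma$; a rewriting system is a set of rules $l\to r$ with $l,r\in\Sigma^*$, complete meaning terminating and confluent; $plq\to prq$ is one rewriting step. $u\simeq v$ means $u=ab$, $v=ba$ for some words $a,b$ (cyclic conjugates). $u\rightsquigarrow v$ means some cyclic conjugate $\tilde u$ of $u$ (possibly $u$) satisfies $\tilde u\to v$; $\rightsquigarrow^*$ is its reflexive–transitive closure. A word is cyclically irreducible if it and all its cyclic conjugates are irreducible. $\mathrm{Allseq}(w)$ is the set of all sequences of cyclical reductions $u_1\rightsquigarrow u_2\rightsquigarrow\cdots$ with $u_1$ a cyclic conjugate of $w$; it terminates if none of them is infinite, and converges if, up to $\simeq$, a unique cyclically irreducible word is reached in it. There is a cyclical overlap between two rules of $\mathfrak{R}$ if they have the form $xuy\to u'$ and $yvx\to v'$ with $u',v'$ words, $u,v,x,y$ non-empty words, and $u'v$, $v'u$ not cyclic conjugates. There is a cyclical inclusion between rules $l\to v$ and $l'\to v'$ if either $l'\simeq l$ and $v,v'$ are not cyclic conjugates, or $l'$ is a proper subword of a cyclic conjugate $\ell_1$ of $l$, written $\ell_1=ul'$ with $u$ non-empty, and $v$ and $uv'$ are not cyclic conjugates. "No cyclical overlaps and no cyclical inclusions in $\mathrm{Allseq}(w)$"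 means that for no word $u$ occurring in a sequence of $\mathrm{Allseq}(w)$ are there rules $r_1,r_2$, each applicable to some cyclic conjugate of $u$, with a cyclical overlap or a cyclical inclusion between $r_1$ and $r_2$. *)

theory Defs
  imports Main
begin

type_synonym 'a rule = "'a list \<times> 'a list"

definition rstep :: "'a rule set \<Rightarrow> ('a list \<times> 'a list) set" where
  "rstep R = {(p @ l @ q, p @ r @ q) | p l r q. (l, r) \<in> R}"

definition terminating :: "'a rule set \<Rightarrow> bool" where
  "terminating R \<longleftrightarrow> wf ((rstep R)\<inverse>)"

definition confluent :: "'a rule set \<Rightarrow> bool" where
  "confluent R \<longleftrightarrow> (\<forall>a b c. (a, b) \<in> (rstep R)\<^sup>* \<and> (a, c) \<in> (rstep R)\<^sup>* \<longrightarrow>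
      (\<exists>d. (b, d) \<in> (rstep R)\<^sup>* \<and> (c, d) \<in> (rstep R)\<^sup>*))"

definition complete :: "'a rule set \<Rightarrow> bool" where
  "complete R \<longleftrightarrow> terminating R \<and> confluent R"

definition cyc_conj :: "'a list \<Rightarrow> 'a list \<Rightarrow> bool" where
  "cyc_conj u v \<longleftrightarrow> (\<exists>a b. u = a @ b \<and> v = b @ a)"

definition irreducible :: "'a rule set \<Rightarrow> 'a list \<Rightarrow> bool" where
  "irreducible R u \<longleftrightarrow> (\<nexists>v. (u, v) \<in> rstep R)"

definition cyc_irreducible :: "'a rule set \<Rightarrow> 'a list \<Rightarrow> bool" where
  "cyc_irreducible R u \<longleftrightarrow> (\<forall>u'. cyc_conj u u' \<longrightarrow> irreducible R u')"

definition cyc_red :: "'a rule set \<Rightarrow> 'a list \<Rightarrow> 'a list \<Rightarrow> bool" where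
  "cyc_red R u v \<longleftrightarrow> (\<exists>u'. cyc_conj u u' \<and> (u', v) \<in> rstep R)"

definition allseq_terminates :: "'a rule set \<Rightarrow> 'a list \<Rightarrow> bool" where
  "allseq_terminates R w \<longleftrightarrow>
     \<not> (\<exists>f :: nat \<Rightarrow> 'a list. cyc_conj w (f 0) \<and> (\<forall>n. cyc_red R (f n) (f (Suc n))))"

definition allseq_words :: "'a rule set \<Rightarrow> 'a list \<Rightarrow> 'a list set" where
  "allseq_words R w = {u. \<exists>u1. cyc_conj w u1 \<and> (cyc_red R)\<^sup>*\<^sup>* u1 u}"

definition allseq_converges :: "'a rule set \<Rightarrow> 'a list \<Rightarrow> bool" where
  "allseq_converges R w \<longleftrightarrow>
     (\<exists>z \<in> allseq_words R w. cyc_irreducible R z \<and>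
        (\<forall>z' \<in> allseq_words R w. cyc_irreducible R z' \<longrightarrow> cyc_conj z z'))"

definition applicable :: "'a rule \<Rightarrow> 'a list \<Rightarrow> bool" where
  "applicable \<rho> u \<longleftrightarrow> (\<exists>p q. u = p @ fst \<rho> @ q)"

definition cyc_overlap :: "'a rule \<Rightarrow> 'a rule \<Rightarrow> bool" where
  "cyc_overlap \<rho>1 \<rho>2 \<longleftrightarrow>
     (\<exists>x u y v. x \<noteq> [] \<and> u \<noteq> [] \<and> y \<noteq> [] \<and> v \<noteq> [] \<and>
        fst \<rho>1 = x @ u @ y \<and> fst \<rho>2 = y @ v @ x \<and>
        \<not> cyc_conj (snd \<rho>1 @ v) (snd \<rho>2 @ u))"

definition cyc_inclusion :: "'a rule \<Rightarrow> 'a rule \<Rightarrow> bool" where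
  "cyc_inclusion \<rho>1 \<rho>2 \<longleftrightarrow>
     (cyc_conj (fst \<rho>2) (fst \<rho>1) \<and> \<not> cyc_conj (snd \<rho>1) (snd \<rho>2)) \<or>
     (\<exists>l1 u. cyc_conj (fst \<rho>1) l1 \<and> u \<noteq> [] \<and> l1 = u @ fst \<rho>2 \<and>
        \<not> cyc_conj (snd \<rho>1) (u @ snd \<rho>2))"

definition no_cyc_overlap_inclusion :: "'a rule set \<Rightarrow> 'a list \<Rightarrow> bool" where
  "no_cyc_overlap_inclusion R w \<longleftrightarrow>
     (\<forall>u \<in> allseq_words R w. \<forall>\<rho>1 \<in> R. \<forall>\<rho>2 \<in> R.
        (\<exists>u1. cyc_conj u u1 \<and> applicable \<rho>1 u1) \<and>
        (\<exists>u2. cyc_conj u u2 \<and> applicable \<rho>2 u2) \<longrightarrow>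
        \<not> cyc_overlap \<rho>1 \<rho>2 \<and> \<not> cyc_inclusion \<rho>1 \<rho>2)"

end

theory Submission
  imports Defs
begin

(* A cyclical reduction of u depends only on the conjugacy class of u, so Allseq(w) is
   governed by the relation \<rightsquigarrow> taken modulo cyclic conjugacy, and the theorem is Newman's
   lemma for rewriting modulo an equivalence: termination plus local confluence modulo
   conjugacy give uniqueness of cyclically irreducible forms up to conjugacy.
   For local confluence, rotate the two reduced conjugates of u so that their redexes come
   first: l1 s1 and l2 s2, which are cyclic conjugates of each other.
   If some rotation contains both redexes as factors of one linear word, confluence of R joins
   the two results. Otherwise the redexes wrap around each other, l1 = c s2 d and
   l2 = d s1 c, which is a cyclical overlap (s1, s2 non-empty) or a cyclical inclusion
   (s1 or s2 empty); since there is none, the two results are cyclic conjugates. *)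

lemma cyc_conj_iff_rotate: "cyc_conj u v \<longleftrightarrow> (\<exists>n. v = rotate n u)"
proof
  assume "cyc_conj u v"
  then obtain a b where "u = a @ b" "v = b @ a"
    unfolding cyc_conj_def by blast
  then show "\<exists>n. v = rotate n u"
    by (metis rotate_append)
next
  assume "\<exists>n. v = rotate n u"
  then show "cyc_conj u v"
    unfolding cyc_conj_def by (metis append_take_drop_id rotate_drop_take)
qed

lemma cyc_conj_refl: "cyc_conj u u"
  unfolding cyc_conj_iff_rotate by (metis rotate0 id_apply)

lemma cyc_conj_sym: "cyc_conj u v \<Longrightarrow> cyc_conj v u"
  unfolding cyc_conj_def by blast

lemma cyc_conj_trans: "cyc_conj u v \<Longrightarrow> cyc_conj v x \<Longrightarrow> cyc_conj u x"
  unfolding cyc_conj_iff_rotate by (metis rotate_rotate)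

lemma cyc_conj_swap: "cyc_conj (a @ b) (b @ a)"
  unfolding cyc_conj_def by blast

lemma rstepI: "(l, r) \<in> R \<Longrightarrow> (p @ l @ q, p @ r @ q) \<in> rstep R"
  unfolding rstep_def by blast

lemma rstep_imp_cyc_red: "(u, v) \<in> rstep R \<Longrightarrow> cyc_red R u v"
  unfolding cyc_red_def using cyc_conj_refl by blast

lemma rtrancl_rstep_imp_rtranclp_cyc_red: "(u, v) \<in> (rstep R)\<^sup>* \<Longrightarrow> (cyc_red R)\<^sup>*\<^sup>* u v"
  by (induction rule: rtrancl_induct) (auto intro: rtranclp.rtrancl_into_rtrancl rstep_imp_cyc_red)

lemma cyc_red_cyc_conj_left: "cyc_conj u u' \<Longrightarrow> cyc_red R u' v \<Longrightarrow> cyc_red R u v"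
  unfolding cyc_red_def by (meson cyc_conj_trans)

lemma cyc_irreducible_iff_no_cyc_red: "cyc_irreducible R u \<longleftrightarrow> (\<nexists>v. cyc_red R u v)"
  unfolding cyc_irreducible_def irreducible_def cyc_red_def by blast

(* Reduction modulo cyclic conjugacy. A single final conjugation suffices, because a cyclical
   reduction may be applied to any conjugate of its source (cyc_red_cyc_conj_left). *)
definition cyc_reach :: "'a rule set \<Rightarrow> 'a list \<Rightarrow> 'a list \<Rightarrow> bool" where
  "cyc_reach R u x \<longleftrightarrow> (\<exists>y. (cyc_red R)\<^sup>*\<^sup>* u y \<and> cyc_conj y x)"

definition cyc_joinable :: "'a rule set \<Rightarrow> 'a list \<Rightarrow> 'a list \<Rightarrow> bool" where
  "cyc_joinable R x y \<longleftrightarrow> (\<exists>d. cyc_reach R x d \<and> cyc_reach R y d)"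

lemma cyc_reach_if_cyc_conj: "cyc_conj u x \<Longrightarrow> cyc_reach R u x"
  unfolding cyc_reach_def by blast

lemma cyc_reach_if_rtranclp: "(cyc_red R)\<^sup>*\<^sup>* u x \<Longrightarrow> cyc_reach R u x"
  unfolding cyc_reach_def using cyc_conj_refl by blast

lemma cyc_reach_trans:
  assumes "cyc_reach R u x" and "cyc_reach R x z"
  shows "cyc_reach R u z"
proof -
  obtain y where uy: "(cyc_red R)\<^sup>*\<^sup>* u y" and "cyc_conj y x"
    using assms(1) unfolding cyc_reach_def by blast
  obtain y' where xy': "(cyc_red R)\<^sup>*\<^sup>* x y'" and "cyc_conj y' z"
    using assms(2) unfolding cyc_reach_def by blast
  from xy' show ?thesis
  proof (cases rule: converse_rtranclpE)
    case base
    then show ?thesis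
      using uy \<open>cyc_conj y x\<close> \<open>cyc_conj y' z\<close> cyc_conj_trans unfolding cyc_reach_def by blast
  next
    case (step x1)
    have "cyc_red R y x1"
      using cyc_red_cyc_conj_left[OF \<open>cyc_conj y x\<close> step(1)] .
    with uy step(2) have "(cyc_red R)\<^sup>*\<^sup>* u y'"
      by (meson rtranclp.rtrancl_into_rtrancl rtranclp_trans)
    with \<open>cyc_conj y' z\<close> show ?thesis
      unfolding cyc_reach_def by blast
  qed
qed

lemma cyc_reach_from_cyc_irreducible:
  "\<nexists>v. cyc_red R z v \<Longrightarrow> cyc_reach R z x \<Longrightarrow> cyc_conj z x"
  unfolding cyc_reach_def by (metis converse_rtranclpE)

lemma cyc_joinable_if_cyc_conj: "cyc_conj x y \<Longrightarrow> cyc_joinable R x y"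
  unfolding cyc_joinable_def using cyc_reach_if_cyc_conj cyc_conj_refl by blast

lemma cyc_joinable_cyc_conj:
  "cyc_conj x x' \<Longrightarrow> cyc_conj y y' \<Longrightarrow> cyc_joinable R x y \<Longrightarrow> cyc_joinable R x' y'"
  unfolding cyc_joinable_def
  by (meson cyc_conj_sym cyc_reach_if_cyc_conj cyc_reach_trans)

lemma cyc_joinable_linear_critical_pair:
  assumes "confluent R" and "(l1, r1) \<in> R" and "(l2, r2) \<in> R"
    and "p1 @ l1 @ q1 = p2 @ l2 @ q2"
    and "cyc_conj (p1 @ r1 @ q1) x" and "cyc_conj (p2 @ r2 @ q2) y"
  shows "cyc_joinable R x y"
proof -
  have "(p1 @ l1 @ q1, p1 @ r1 @ q1) \<in> (rstep R)\<^sup>*" "(p1 @ l1 @ q1, p2 @ r2 @ q2) \<in> (rstep R)\<^sup>*"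
    using rstepI[OF assms(2), of p1 q1] rstepI[OF assms(3), of p2 q2] assms(4) by auto
  then obtain d where "(p1 @ r1 @ q1, d) \<in> (rstep R)\<^sup>*" "(p2 @ r2 @ q2, d) \<in> (rstep R)\<^sup>*"
    using \<open>confluent R\<close> unfolding confluent_def by blast
  then have "cyc_joinable R (p1 @ r1 @ q1) (p2 @ r2 @ q2)"
    unfolding cyc_joinable_def by (blast intro: cyc_reach_if_rtranclp rtrancl_rstep_imp_rtranclp_cyc_red)
  with assms(5,6) show ?thesis
    by (rule cyc_joinable_cyc_conj)
qed

lemma cyc_conj_wrapping_critical_pair:
  assumes "\<not> cyc_overlap (l1, r1) (l2, r2)"
    and "\<not> cyc_inclusion (l1, r1) (l2, r2)" and "\<not> cyc_inclusion (l2, r2) (l1, r1)"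
    and l1: "l1 = c @ s2 @ d" and l2: "l2 = d @ s1 @ c" and "c \<noteq> []" and "d \<noteq> []"
  shows "cyc_conj (r1 @ s1) (r2 @ s2)"
proof (cases "s1 = []"; cases "s2 = []")
  assume "s1 = []" "s2 = []"
  then have "cyc_conj l2 l1"
    using l1 l2 cyc_conj_swap[of d c] by simp
  then show ?thesis
    using assms(2) \<open>s1 = []\<close> \<open>s2 = []\<close> unfolding cyc_inclusion_def by auto
next
  assume "s1 = []" "s2 \<noteq> []"
  then have "cyc_conj l1 (s2 @ l2)"
    using l1 l2 cyc_conj_swap[of c "s2 @ d"] by simp
  then have "cyc_conj r1 (s2 @ r2)"
    using assms(2) \<open>s2 \<noteq> []\<close> unfolding cyc_inclusion_def by auto
  then show ?thesis
    using \<open>s1 = []\<close> cyc_conj_trans cyc_conj_swap by fastforce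
next
  assume "s1 \<noteq> []" "s2 = []"
  then have "cyc_conj l2 (s1 @ l1)"
    using l1 l2 cyc_conj_swap[of d "s1 @ c"] by simp
  then have "cyc_conj r2 (s1 @ r1)"
    using assms(3) \<open>s1 \<noteq> []\<close> unfolding cyc_inclusion_def by auto
  then show ?thesis
    using \<open>s2 = []\<close> cyc_conj_trans cyc_conj_swap cyc_conj_sym by fastforce
next
  assume "s1 \<noteq> []" "s2 \<noteq> []"
  then show ?thesis
    using assms(1) \<open>c \<noteq> []\<close> \<open>d \<noteq> []\<close> l1 l2 unfolding cyc_overlap_def
    by (metis fst_conv snd_conv)
qed

lemma cyc_joinable_critical_pair_inside_redex:
  assumes conf: "confluent R" and R1: "(l1, r1) \<in> R" and R2: "(l2, r2) \<in> R"
    and no_ov_inc: "\<not> cyc_overlap (l1, r1) (l2, r2)"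
      "\<not> cyc_inclusion (l1, r1) (l2, r2)" "\<not> cyc_inclusion (l2, r2) (l1, r1)"
    and l1: "l1 = a @ t" and "t @ s1 @ a = l2 @ s2"
  shows "cyc_joinable R (r1 @ s1) (r2 @ s2)"
proof -
  obtain t' where "t @ s1 = l2 @ t' \<and> s2 = t' @ a \<or> l2 = t @ s1 @ t' \<and> a = t' @ s2"
    using \<open>t @ s1 @ a = l2 @ s2\<close> by (metis append_eq_append_conv2 append.assoc)
  then show ?thesis
  proof
    assume "t @ s1 = l2 @ t' \<and> s2 = t' @ a"
    then show ?thesis
      using l1 cyc_conj_swap[of a "r2 @ t'"] cyc_conj_refl
      by (intro cyc_joinable_linear_critical_pair[OF conf R1 R2, of "[]" s1 a t']) auto
  next
    assume l2: "l2 = t @ s1 @ t' \<and> a = t' @ s2"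
    consider "t = []" | "t' = []" | "t \<noteq> []" "t' \<noteq> []"
      by blast
    then show ?thesis
    proof cases
      case 1
      then show ?thesis
        using l1 l2 cyc_conj_swap[of s1 r1] cyc_conj_refl
        by (intro cyc_joinable_linear_critical_pair[OF conf R1 R2, of s1 "[]" "[]" s2]) auto
    next
      case 2
      then show ?thesis
        using l1 l2 cyc_conj_swap[of s2 r2] cyc_conj_refl
        by (intro cyc_joinable_linear_critical_pair[OF conf R1 R2, of "[]" s1 s2 "[]"]) auto
    next
      case 3
      with l1 l2 have "cyc_conj (r1 @ s1) (r2 @ s2)"
        by (intro cyc_conj_wrapping_critical_pair[OF no_ov_inc, of t' s2 t s1]) auto
      then show ?thesis
        by (rule cyc_joinable_if_cyc_conj)
    qed
  qed
qed

lemma cyc_joinable_critical_pair: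
  assumes conf: "confluent R" and R1: "(l1, r1) \<in> R" and R2: "(l2, r2) \<in> R"
    and no_ov_inc: "\<not> cyc_overlap (l1, r1) (l2, r2)"
      "\<not> cyc_inclusion (l1, r1) (l2, r2)" "\<not> cyc_inclusion (l2, r2) (l1, r1)"
    and "cyc_conj (l1 @ s1) (l2 @ s2)"
  shows "cyc_joinable R (r1 @ s1) (r2 @ s2)"
proof -
  obtain a b where ab: "l1 @ s1 = a @ b" "l2 @ s2 = b @ a"
    using \<open>cyc_conj (l1 @ s1) (l2 @ s2)\<close> unfolding cyc_conj_def by blast
  then obtain t where "a = l1 @ t \<and> s1 = t @ b \<or> l1 = a @ t \<and> b = t @ s1"
    by (metis append_eq_append_conv2)
  then show ?thesis
  proof
    assume "a = l1 @ t \<and> s1 = t @ b"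
    then show ?thesis
      using ab cyc_conj_swap[of b "r1 @ t"] cyc_conj_refl
      by (intro cyc_joinable_linear_critical_pair[OF conf R1 R2, of b t "[]" s2]) auto
  next
    assume "l1 = a @ t \<and> b = t @ s1"
    with ab show ?thesis
      by (intro cyc_joinable_critical_pair_inside_redex[OF conf R1 R2 no_ov_inc, of a t]) auto
  qed
qed

lemma cyc_red_local_confluence:
  assumes conf: "confluent R"
    and no_ov_inc: "\<And>\<rho>1 \<rho>2 u1 u2. \<lbrakk>\<rho>1 \<in> R; \<rho>2 \<in> R; cyc_conj u u1; applicable \<rho>1 u1;
      cyc_conj u u2; applicable \<rho>2 u2\<rbrakk> \<Longrightarrow> \<not> cyc_overlap \<rho>1 \<rho>2 \<and> \<not> cyc_inclusion \<rho>1 \<rho>2"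
    and "cyc_red R u v1" and "cyc_red R u v2"
  shows "cyc_joinable R v1 v2"
proof -
  obtain p1 l1 r1 q1 where u1: "cyc_conj u (p1 @ l1 @ q1)" and v1: "v1 = p1 @ r1 @ q1"
    and R1: "(l1, r1) \<in> R"
    using \<open>cyc_red R u v1\<close> unfolding cyc_red_def rstep_def by blast
  obtain p2 l2 r2 q2 where u2: "cyc_conj u (p2 @ l2 @ q2)" and v2: "v2 = p2 @ r2 @ q2"
    and R2: "(l2, r2) \<in> R"
    using \<open>cyc_red R u v2\<close> unfolding cyc_red_def rstep_def by blast
  have "applicable (l1, r1) (p1 @ l1 @ q1)" "applicable (l2, r2) (p2 @ l2 @ q2)"
    unfolding applicable_def by auto
  then have "\<not> cyc_overlap (l1, r1) (l2, r2)"
    "\<not> cyc_inclusion (l1, r1) (l2, r2)" "\<not> cyc_inclusion (l2, r2) (l1, r1)"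
    using no_ov_inc R1 R2 u1 u2 by blast+
  moreover have "cyc_conj (l1 @ q1 @ p1) (l2 @ q2 @ p2)"
    using u1 u2 cyc_conj_swap[of p1 "l1 @ q1"] cyc_conj_swap[of p2 "l2 @ q2"]
    by (metis append.assoc cyc_conj_sym cyc_conj_trans)
  ultimately have "cyc_joinable R (r1 @ q1 @ p1) (r2 @ q2 @ p2)"
    by (rule cyc_joinable_critical_pair[OF conf R1 R2])
  then show ?thesis
    using v1 v2 cyc_conj_swap[of "r1 @ q1" p1] cyc_conj_swap[of "r2 @ q2" p2]
    by (metis append.assoc cyc_joinable_cyc_conj)
qed

lemma rtranclp_prepend_infinite_chain:
  assumes "r\<^sup>*\<^sup>* x (f 0)" and "\<forall>i. r (f i) (f (Suc i))"
  shows "\<exists>g. g 0 = x \<and> (\<forall>i. r (g i) (g (Suc i)))"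
proof -
  obtain n h where h: "h 0 = x" "h n = f 0" "\<forall>i<n. r (h i) (h (Suc i))"
    using rtranclp_imp_relpowp[OF assms(1)] unfolding relpowp_fun_conv by blast
  let ?g = "\<lambda>i. if i \<le> n then h i else f (i - n)"
  have "r (?g i) (?g (Suc i))" for i
    using h assms(2) by (cases "i < n") (auto simp: Suc_diff_le)
  with h(1) show ?thesis
    by (intro exI[of _ ?g]) auto
qed

lemma rtranclp_cyc_red_in_allseq_words: "(cyc_red R)\<^sup>*\<^sup>* w u \<Longrightarrow> u \<in> allseq_words R w"
  unfolding allseq_words_def using cyc_conj_refl by blast

lemma allseq_words_closed: "u \<in> allseq_words R w \<Longrightarrow> cyc_red R u v \<Longrightarrow> v \<in> allseq_words R w"
  unfolding allseq_words_def by (auto intro: rtranclp.rtrancl_into_rtrancl)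

lemma cyc_reach_if_in_allseq_words: "u \<in> allseq_words R w \<Longrightarrow> cyc_reach R w u"
  unfolding allseq_words_def
  by (blast intro: cyc_reach_trans cyc_reach_if_cyc_conj cyc_reach_if_rtranclp)

lemma wfp_on_allseq_words:
  assumes "allseq_terminates R w"
  shows "wfp_on (allseq_words R w) (cyc_red R)\<inverse>\<inverse>"
proof -
  have no_chain: False if chain: "\<forall>i. cyc_red R (f i) (f (Suc i))" and "f 0 \<in> allseq_words R w" for f
  proof -
    obtain u1 where "cyc_conj w u1" and "(cyc_red R)\<^sup>*\<^sup>* u1 (f 0)"
      using \<open>f 0 \<in> allseq_words R w\<close> unfolding allseq_words_def by blast
    then obtain g where "g 0 = u1" and "\<forall>i. cyc_red R (g i) (g (Suc i))"
      using rtranclp_prepend_infinite_chain[of "cyc_red R" u1 f] chain by blast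
    with \<open>cyc_conj w u1\<close> show False
      using assms unfolding allseq_terminates_def by blast
  qed
  show ?thesis
    unfolding wfp_on_iff_wfp[of "allseq_words R w"] wfp_def wf_iff_no_infinite_down_chain
  proof (intro notI, elim exE)
    fix f
    assume "\<forall>i. (f (Suc i), f i) \<in> {(x, y). (cyc_red R)\<inverse>\<inverse> x y \<and> x \<in> allseq_words R w \<and> y \<in> allseq_words R w}"
    then have "\<forall>i. cyc_red R (f i) (f (Suc i))" and "f 0 \<in> allseq_words R w"
      by auto
    then show False
      by (rule no_chain)
  qed
qed

lemma newman_modulo_cyc_conj:
  assumes wf: "wfp_on W (cyc_red R)\<inverse>\<inverse>"
    and closed: "\<And>u v. u \<in> W \<Longrightarrow> cyc_red R u v \<Longrightarrow> v \<in> W"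
    and local_conf: "\<And>u v1 v2. u \<in> W \<Longrightarrow> cyc_red R u v1 \<Longrightarrow> cyc_red R u v2 \<Longrightarrow> cyc_joinable R v1 v2"
    and "u \<in> W" and "(cyc_red R)\<^sup>*\<^sup>* u v1" and "(cyc_red R)\<^sup>*\<^sup>* u v2"
  shows "cyc_joinable R v1 v2"
  using wf \<open>u \<in> W\<close> assms(5,6)
proof (induction u arbitrary: v1 v2 rule: wfp_on_induct[consumes 2, case_names less])
  case (less u)
  consider "u = v1" | "u = v2" | u1 u2 where "cyc_red R u u1" "(cyc_red R)\<^sup>*\<^sup>* u1 v1"
    "cyc_red R u u2" "(cyc_red R)\<^sup>*\<^sup>* u2 v2"
    using "less.prems"(1,2) by (metis converse_rtranclpE)
  then show ?case
  proof cases
    case 1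
    then show ?thesis
      using "less.prems"(2) cyc_reach_if_rtranclp cyc_reach_if_cyc_conj cyc_conj_refl
      unfolding cyc_joinable_def by blast
  next
    case 2
    then show ?thesis
      using "less.prems"(1) cyc_reach_if_rtranclp cyc_reach_if_cyc_conj cyc_conj_refl
      unfolding cyc_joinable_def by blast
  next
    case (3 u1 u2)
    have "u1 \<in> W" "u2 \<in> W"
      using closed "less.hyps" 3 by blast+
    obtain e where "cyc_reach R u1 e" "cyc_reach R u2 e"
      using local_conf[OF "less.hyps" 3(1,3)] unfolding cyc_joinable_def by blast
    then obtain e1 where u1e1: "(cyc_red R)\<^sup>*\<^sup>* u1 e1" and "cyc_conj e1 e"
      unfolding cyc_reach_def by blast
    obtain d1 where v1d1: "cyc_reach R v1 d1" and "cyc_reach R e1 d1"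
      using "less.IH"[OF \<open>u1 \<in> W\<close> _ 3(2) u1e1] 3(1) unfolding cyc_joinable_def by blast
    have "cyc_reach R u2 d1"
      using \<open>cyc_reach R u2 e\<close> \<open>cyc_conj e1 e\<close> \<open>cyc_reach R e1 d1\<close>
      by (meson cyc_conj_sym cyc_reach_if_cyc_conj cyc_reach_trans)
    then obtain y where u2y: "(cyc_red R)\<^sup>*\<^sup>* u2 y" and "cyc_conj y d1"
      unfolding cyc_reach_def by blast
    obtain d2 where "cyc_reach R v2 d2" and "cyc_reach R y d2"
      using "less.IH"[OF \<open>u2 \<in> W\<close> _ 3(4) u2y] 3(3) unfolding cyc_joinable_def by blast
    moreover have "cyc_reach R v1 d2"
      using v1d1 \<open>cyc_conj y d1\<close> \<open>cyc_reach R y d2\<close>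
      by (meson cyc_conj_sym cyc_reach_if_cyc_conj cyc_reach_trans)
    ultimately show ?thesis
      unfolding cyc_joinable_def by blast
  qed
qed

lemma allseq_words_local_confluence:
  assumes "complete R" and "no_cyc_overlap_inclusion R w"
    and "u \<in> allseq_words R w" and "cyc_red R u v1" and "cyc_red R u v2"
  shows "cyc_joinable R v1 v2"
proof (rule cyc_red_local_confluence[OF _ _ assms(4,5)])
  show "confluent R"
    using assms(1) unfolding complete_def by blast
  show "\<not> cyc_overlap \<rho>1 \<rho>2 \<and> \<not> cyc_inclusion \<rho>1 \<rho>2"
    if "\<rho>1 \<in> R" "\<rho>2 \<in> R" "cyc_conj u u1" "applicable \<rho>1 u1" "cyc_conj u u2" "applicable \<rho>2 u2"
    for \<rho>1 \<rho>2 u1 u2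
    using assms(2,3) that unfolding no_cyc_overlap_inclusion_def by blast
qed

lemma ex_cyc_irreducible_reduct:
  assumes "allseq_terminates R w"
  obtains z where "(cyc_red R)\<^sup>*\<^sup>* w z" and "\<nexists>v. cyc_red R z v"
proof -
  have "{x. (cyc_red R)\<^sup>*\<^sup>* w x} \<subseteq> allseq_words R w"
    using rtranclp_cyc_red_in_allseq_words by blast
  then show ?thesis
    using that ex_terminating_rtranclp_strong[OF wfp_on_subset[OF wfp_on_allseq_words[OF assms]]]
    by blast
qed

lemma cyc_conj_if_cyc_joinable_irreducible:
  assumes "cyc_joinable R z z'" and "\<nexists>v. cyc_red R z v" and "\<nexists>v. cyc_red R z' v"
  shows "cyc_conj z z'"
proof -
  obtain d where "cyc_conj z d" and "cyc_conj z' d"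
    using assms cyc_reach_from_cyc_irreducible unfolding cyc_joinable_def by blast
  then show ?thesis
    using cyc_conj_sym cyc_conj_trans by blast
qed

theorem proposition5p7:
  fixes R :: "'a rule set" and w :: "'a list"
  assumes "complete R"
    and "allseq_terminates R w"
    and "no_cyc_overlap_inclusion R w"
  shows "allseq_converges R w"
proof -
  obtain z where wz: "(cyc_red R)\<^sup>*\<^sup>* w z" and z_irr: "\<nexists>v. cyc_red R z v"
    using ex_cyc_irreducible_reduct[OF assms(2)] .
  show ?thesis
    unfolding allseq_converges_def cyc_irreducible_iff_no_cyc_red
  proof (intro bexI[of _ z] conjI ballI impI)
    show "z \<in> allseq_words R w"
      using wz by (rule rtranclp_cyc_red_in_allseq_words)
    show "\<nexists>v. cyc_red R z v"
      by (fact z_irr)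
    fix z'
    assume "z' \<in> allseq_words R w" and z'_irr: "\<nexists>v. cyc_red R z' v"
    then obtain y where wy: "(cyc_red R)\<^sup>*\<^sup>* w y" and "cyc_conj y z'"
      using cyc_reach_if_in_allseq_words unfolding cyc_reach_def by blast
    have "w \<in> allseq_words R w"
      by (rule rtranclp_cyc_red_in_allseq_words[OF rtranclp.rtrancl_refl])
    have "cyc_joinable R z y"
      using newman_modulo_cyc_conj[OF wfp_on_allseq_words[OF assms(2)] allseq_words_closed
          allseq_words_local_confluence[OF assms(1,3)] \<open>w \<in> allseq_words R w\<close> wz wy] .
    then have "cyc_joinable R z z'"
      by (rule cyc_joinable_cyc_conj[OF cyc_conj_refl \<open>cyc_conj y z'\<close>])
    with z_irr z'_irr show "cyc_conj z z'"
      by (intro cyc_conj_if_cyc_joinable_irreducible)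
  qed
qed

end
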